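(* Let $X$, $(Y,d_Y)$, $(Z,d_Z)$ be Polish (metric) spaces, let $M$ be a compact Hausdorff space, and let $P: X \rightsquigarrow Y$, $Q: Y \rightsquigarrow Z$ be tight Feller kernels with all values in $\mathcal{P}_1$. Assume $W_1(Q(y), Q(y')) \le L\, d_Y(y,y')$ for all $y,y' \in Y$. Then for any $\delta, \epsilon \ge 0$ and any closed $S \subseteq Z \times M$, $$P^{*,\delta}_W(Q^{*,\epsilon}_W S) \subseteq (Q \circ P)^{*,L\delta+\epsilon}_W S.$$
   Context: Tight Feller kernels as usual ($P(x,\cdot)$ Borel probability measures; Feller: $x \mapsto \int\phi\,dP(x,\cdot)$ continuous for bounded continuous $\phi$; tight: uniform compact concentration over compact input sets); $(Q\circ P)(x,C) = \int Q(y,C)\,P(x,dy)$. $\mathcal{P}_1(Y)$ is the set of Borel probability measures with finite first moment; $W_1(\mu,\nu) = \inf_{\pi \in \Pi(\mu,\nu)} \int d(y,y')\,d\pi$ over couplings. For closed $A \subseteq Y$, $\mathcal{P}_A = \{\nu \in \mathcal{P}_1(Y) : \mathrm{supp}(\nu) \subseteq A\}$ and $W_1(\mu, \mathcal{P}_A) = \inf_{\nu \in \mathcal{P}_A} W_1(\mu,\nu)$. For a kernel $P: X \rightsquigarrow Y$ and relation $S \subseteq Y \times M$, the Wasserstein pullback is $P^{*,\epsilon}_W S = \{(x,m) \in X \times M : W_1(P(x), \mathcal{P}_{S_m}) \le \epsilon\}$, $S_m = \{y : (y,m) \in S\}$. *)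

theory Defs
  imports "HOL-Probability.Probability"
begin

definition borel_prob :: "'a::topological_space measure \<Rightarrow> bool" where
  "borel_prob \<mu> \<longleftrightarrow> sets \<mu> = sets borel \<and> prob_space \<mu>"

definition finite_first_moment :: "'a::metric_space measure \<Rightarrow> bool" where
  "finite_first_moment \<mu> \<longleftrightarrow> (\<exists>y0. (\<integral>\<^sup>+ y. ennreal (dist y y0) \<partial>\<mu>) < \<infinity>)"

definition P1 :: "'a::metric_space measure set" where
  "P1 = {\<mu>. borel_prob \<mu> \<and> finite_first_moment \<mu>}"

definition couplings :: "'a::metric_space measure \<Rightarrow> 'a measure \<Rightarrow> ('a \<times> 'a) measure set" where
  "couplings \<mu> \<nu> = {\<pi>. borel_prob \<pi> \<and> distr \<pi> borel fst = \<mu> \<and> distr \<pi> borel snd = \<nu>}"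

definition W1 :: "'a::metric_space measure \<Rightarrow> 'a measure \<Rightarrow> ennreal" where
  "W1 \<mu> \<nu> = (INF \<pi>\<in>couplings \<mu> \<nu>. \<integral>\<^sup>+ p. ennreal (dist (fst p) (snd p)) \<partial>\<pi>)"

definition msupp :: "'a::topological_space measure \<Rightarrow> 'a set" where
  "msupp \<nu> = {y. \<forall>U. open U \<and> y \<in> U \<longrightarrow> emeasure \<nu> U > 0}"

definition PA :: "'a::metric_space set \<Rightarrow> 'a measure set" where
  "PA A = {\<nu>\<in>P1. msupp \<nu> \<subseteq> A}"

definition W1_set :: "'a::metric_space measure \<Rightarrow> 'a measure set \<Rightarrow> ennreal" where
  "W1_set \<mu> N = (INF \<nu>\<in>N. W1 \<mu> \<nu>)"

definition rel_section :: "('y \<times> 'm) set \<Rightarrow> 'm \<Rightarrow> 'y set" where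
  "rel_section S m = {y. (y, m) \<in> S}"

definition wpullback :: "('x \<Rightarrow> 'y::metric_space measure) \<Rightarrow> real \<Rightarrow> ('y \<times> 'm) set \<Rightarrow> ('x \<times> 'm) set" where
  "wpullback P \<epsilon> S = {(x, m). W1_set (P x) (PA (rel_section S m)) \<le> ennreal \<epsilon>}"

definition markov_kernel :: "('x \<Rightarrow> 'y::topological_space measure) \<Rightarrow> bool" where
  "markov_kernel P \<longleftrightarrow> (\<forall>x. borel_prob (P x))"

definition feller :: "('x::topological_space \<Rightarrow> 'y::topological_space measure) \<Rightarrow> bool" where
  "feller P \<longleftrightarrow> (\<forall>\<phi>::'y \<Rightarrow> real. continuous_on UNIV \<phi> \<and> bounded (range \<phi>) \<longrightarrow>
      continuous_on UNIV (\<lambda>x. \<integral>y. \<phi> y \<partial>P x))"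

definition tight_kernel :: "('x::topological_space \<Rightarrow> 'y::topological_space measure) \<Rightarrow> bool" where
  "tight_kernel P \<longleftrightarrow> (\<forall>K e. compact K \<and> e > 0 \<longrightarrow>
      (\<exists>C. compact C \<and> (\<forall>x\<in>K. measure (P x) (UNIV - C) \<le> e)))"

definition kcomp :: "('y::topological_space \<Rightarrow> 'z::topological_space measure) \<Rightarrow> ('x \<Rightarrow> 'y measure) \<Rightarrow> 'x \<Rightarrow> 'z measure" where
  "kcomp Q P x = measure_of UNIV (sets borel) (\<lambda>C. \<integral>\<^sup>+ y. emeasure (Q y) C \<partial>P x)"

end

theory Submission
  imports Defs
begin

text \<open>For closed nonempty \<open>C\<close> and \<open>\<mu> \<in> P\<^sub>1\<close> the distance \<open>W\<^sub>1(\<mu>, P\<^sub>C)\<close> equals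
  \<open>\<integral> d(z, C) d\<mu>\<close>: couplings give the lower bound, and a measurable almost-nearest-point
  map into \<open>C\<close> the upper bound. Fix \<open>(x, m)\<close> in the left-hand side, let \<open>C\<close> be the section
  \<open>S\<^sub>m\<close> and \<open>A = {y. W\<^sub>1(Q y, P\<^sub>C) \<le> \<epsilon>}\<close>. By Kantorovich duality in its easy direction the
  function \<open>g y = \<integral> d(z, C) dQ(y)\<close> is \<open>L\<close>-Lipschitz, and \<open>g \<le> \<epsilon>\<close> on \<open>A\<close>, so
  \<open>g \<le> \<epsilon> + L d(\<cdot>, A)\<close>. Integrating against \<open>P x\<close> gives
  \<open>W\<^sub>1((Q \<circ> P) x, P\<^sub>C) = \<integral> g dP(x) \<le> \<epsilon> + L W\<^sub>1(P x, P\<^sub>A) \<le> \<epsilon> + L\<delta>\<close>.\<close>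

lemma borel_measurable_infdist [measurable]: "(\<lambda>z. infdist z A) \<in> borel_measurable borel"
  by (intro borel_measurable_continuous_onI continuous_intros)

lemma measurable_fst_borel [measurable]:
  "fst \<in> (borel :: ('a::second_countable_topology \<times> 'b::second_countable_topology) measure) \<rightarrow>\<^sub>M borel"
  by (intro borel_measurable_continuous_onI continuous_intros)

lemma measurable_snd_borel [measurable]:
  "snd \<in> (borel :: ('a::second_countable_topology \<times> 'b::second_countable_topology) measure) \<rightarrow>\<^sub>M borel"
  by (intro borel_measurable_continuous_onI continuous_intros)

lemma AE_in_msupp:
  fixes \<nu> :: "'a::{metric_space,second_countable_topology} measure"
  assumes "borel_prob \<nu>"
  shows "AE y in \<nu>. y \<in> msupp \<nu>"
proof -
  have sets: "sets \<nu> = sets borel" using assms by (simp add: borel_prob_def)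
  define F where "F = {U::'a set. open U \<and> emeasure \<nu> U = 0}"
  have eq: "- msupp \<nu> = \<Union>F"
    by (auto simp: msupp_def F_def not_less)
  obtain F' where F': "F' \<subseteq> F" "countable F'" "\<Union>F' = \<Union>F"
    using Lindelof[of F] unfolding F_def by blast
  have "\<Union>F' \<in> null_sets \<nu>"
    using F' by (intro null_sets_UN'[where I=F' and N="\<lambda>U. U", simplified])
      (auto simp: F_def null_sets_def sets)
  then show ?thesis
    using eq F' by (intro AE_I[of _ _ "- msupp \<nu>"]) auto
qed

lemma msupp_subset_closed:
  assumes "closed C" "emeasure \<nu> (- C) = 0"
  shows "msupp \<nu> \<subseteq> C"
  using assms by (force simp: msupp_def open_Compl)

lemma PA_empty: "PA ({} :: 'a::{metric_space,second_countable_topology} set) = {}"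
proof (rule ccontr)
  assume "PA ({} :: 'a set) \<noteq> {}"
  then obtain \<nu> :: "'a measure" where bp: "borel_prob \<nu>" and "msupp \<nu> \<subseteq> {}"
    by (auto simp: PA_def P1_def)
  then have "AE y in \<nu>. False" using AE_in_msupp[OF bp] by auto
  with bp show False by (simp add: borel_prob_def prob_space.AE_False)
qed

lemma W1_set_PA_le_imp_nonempty:
  fixes \<mu> :: "'a::{metric_space,second_countable_topology} measure"
  assumes "W1_set \<mu> (PA A) \<le> ennreal r"
  shows "A \<noteq> {}"
  using assms by (auto simp: W1_set_def PA_empty top_unique)

lemma nn_integral_le_plus_coupling_cost:
  fixes f :: "'a::{metric_space,second_countable_topology} \<Rightarrow> real"
  assumes \<pi>: "\<pi> \<in> couplings \<mu> \<nu>" and lip: "\<And>a b. f a \<le> f b + dist a b"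
    and nonneg: "\<And>a. f a \<ge> 0" and [measurable]: "f \<in> borel_measurable borel"
  shows "(\<integral>\<^sup>+ y. f y \<partial>\<mu>) \<le> (\<integral>\<^sup>+ y. f y \<partial>\<nu>) + (\<integral>\<^sup>+ p. dist (fst p) (snd p) \<partial>\<pi>)"
proof -
  have [measurable_cong]: "sets \<pi> = sets borel" and \<mu>: "\<mu> = distr \<pi> borel fst"
    and \<nu>: "\<nu> = distr \<pi> borel snd"
    using \<pi> by (auto simp: couplings_def borel_prob_def)
  have "(\<integral>\<^sup>+ y. f y \<partial>\<mu>) = (\<integral>\<^sup>+ p. f (fst p) \<partial>\<pi>)"
    unfolding \<mu> by (rule nn_integral_distr[where M'=borel]) measurable
  also have "\<dots> \<le> (\<integral>\<^sup>+ p. ennreal (f (snd p)) + dist (fst p) (snd p) \<partial>\<pi>)"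
    using lip nonneg by (intro nn_integral_mono) (simp add: ennreal_plus[symmetric] del: ennreal_plus)
  also have "\<dots> = (\<integral>\<^sup>+ p. f (snd p) \<partial>\<pi>) + (\<integral>\<^sup>+ p. dist (fst p) (snd p) \<partial>\<pi>)"
    by (rule nn_integral_add) measurable
  also have "(\<integral>\<^sup>+ p. f (snd p) \<partial>\<pi>) = (\<integral>\<^sup>+ y. f y \<partial>\<nu>)"
    unfolding \<nu> by (rule nn_integral_distr[where M'=borel, symmetric]) measurable
  finally show ?thesis .
qed

lemma nn_integral_le_plus_W1:
  fixes f :: "'a::{metric_space,second_countable_topology} \<Rightarrow> real"
  assumes "\<And>a b. f a \<le> f b + dist a b" "\<And>a. f a \<ge> 0" "f \<in> borel_measurable borel"
  shows "(\<integral>\<^sup>+ y. f y \<partial>\<mu>) \<le> (\<integral>\<^sup>+ y. f y \<partial>\<nu>) + W1 \<mu> \<nu>"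
proof (cases "W1 \<mu> \<nu> = \<infinity>")
  case False
  show ?thesis
  proof (rule ennreal_le_epsilon)
    fix e :: real assume "0 < e"
    then obtain \<pi> where \<pi>: "\<pi> \<in> couplings \<mu> \<nu>"
      and cost: "(\<integral>\<^sup>+ p. dist (fst p) (snd p) \<partial>\<pi>) < W1 \<mu> \<nu> + e"
      using INF_approx_ennreal[OF _ W1_def False] by blast
    have "(\<integral>\<^sup>+ y. f y \<partial>\<mu>) \<le> (\<integral>\<^sup>+ y. f y \<partial>\<nu>) + (\<integral>\<^sup>+ p. dist (fst p) (snd p) \<partial>\<pi>)"
      using \<pi> assms by (rule nn_integral_le_plus_coupling_cost)
    also have "\<dots> \<le> (\<integral>\<^sup>+ y. f y \<partial>\<nu>) + W1 \<mu> \<nu> + e"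
      using cost by (simp add: add.assoc add_left_mono)
    finally show "(\<integral>\<^sup>+ y. f y \<partial>\<mu>) \<le> (\<integral>\<^sup>+ y. f y \<partial>\<nu>) + W1 \<mu> \<nu> + e" .
  qed
qed simp

lemma nn_integral_infdist_le_W1:
  fixes \<mu> :: "'a::{metric_space,second_countable_topology} measure"
  assumes "\<nu> \<in> PA A"
  shows "(\<integral>\<^sup>+ y. infdist y A \<partial>\<mu>) \<le> W1 \<mu> \<nu>"
  unfolding W1_def
proof (rule INF_greatest)
  fix \<pi> assume \<pi>: "\<pi> \<in> couplings \<mu> \<nu>"
  have [measurable_cong]: "sets \<pi> = sets borel" and \<mu>: "\<mu> = distr \<pi> borel fst"
    and \<nu>: "\<nu> = distr \<pi> borel snd"
    using \<pi> by (auto simp: couplings_def borel_prob_def)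
  have "borel_prob \<nu>" and supp: "msupp \<nu> \<subseteq> A"
    using assms by (auto simp: PA_def P1_def)
  then have "AE y in distr \<pi> borel snd. y \<in> msupp \<nu>"
    unfolding \<nu> [symmetric] by (intro AE_in_msupp)
  then have "AE p in \<pi>. snd p \<in> msupp \<nu>"
    by (rule AE_distrD[rotated]) measurable
  then have "(\<integral>\<^sup>+ p. infdist (fst p) A \<partial>\<pi>) \<le> (\<integral>\<^sup>+ p. dist (fst p) (snd p) \<partial>\<pi>)"
    using supp by (intro nn_integral_mono_AE) (auto intro!: infdist_le)
  moreover have "(\<integral>\<^sup>+ y. infdist y A \<partial>\<mu>) = (\<integral>\<^sup>+ p. infdist (fst p) A \<partial>\<pi>)"
    unfolding \<mu> by (rule nn_integral_distr[where M'=borel]) measurable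
  ultimately show "(\<integral>\<^sup>+ y. infdist y A \<partial>\<mu>) \<le> (\<integral>\<^sup>+ p. dist (fst p) (snd p) \<partial>\<pi>)"
    by simp
qed

lemma nn_integral_infdist_le_W1_set:
  fixes \<mu> :: "'a::{metric_space,second_countable_topology} measure"
  shows "(\<integral>\<^sup>+ y. infdist y A \<partial>\<mu>) \<le> W1_set \<mu> (PA A)"
  unfolding W1_set_def by (rule INF_greatest) (rule nn_integral_infdist_le_W1)

lemma infdist_approx:
  assumes "A \<noteq> {}" "e > 0"
  obtains a where "a \<in> A" "dist x a < infdist x A + e"
  using assms cINF_less_iff[of A "dist x" "infdist x A + e"] by (auto simp: infdist_notempty)

lemma infdist_dense_subset:
  assumes "D \<subseteq> C" "C \<subseteq> closure D"
  shows "infdist x D = infdist x C"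
proof -
  have "closure C = closure D"
    using assms by (metis closure_closure closure_mono subset_antisym)
  then show ?thesis
    by (metis infdist_eq_setdist setdist_closure_2)
qed

lemma measurable_near_selection:
  fixes C :: "'a::{metric_space,second_countable_topology} set"
  assumes "C \<noteq> {}" "e > 0"
  obtains T where "T \<in> borel_measurable borel" "\<And>z. T z \<in> C"
    "\<And>z. dist z (T z) < infdist z C + e"
proof -
  obtain D where D: "countable D" "D \<subseteq> C" "C \<subseteq> closure D"
    using separable by blast
  then have "D \<noteq> {}"
    using assms(1) by auto
  define c where "c = from_nat_into D"
  have c: "range c = D"
    unfolding c_def using D \<open>D \<noteq> {}\<close> by simp
  have near: "\<exists>n. dist z (c n) < infdist z C + e" for z
  proof -
    obtain d where "d \<in> D" "dist z d < infdist z D + e"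
      using infdist_approx[OF \<open>D \<noteq> {}\<close> \<open>e > 0\<close>] .
    then show ?thesis
      using c infdist_dense_subset[OF D(2,3)] by (metis rangeE)
  qed
  define N where "N z = (LEAST n. dist z (c n) < infdist z C + e)" for z
  have "N \<in> borel \<rightarrow>\<^sub>M count_space UNIV"
    unfolding N_def by measurable
  then have "(\<lambda>z. c (N z)) \<in> borel_measurable borel"
    by (rule measurable_compose) simp
  moreover have "c (N z) \<in> C" for z
    using c D(2) by auto
  moreover have "dist z (c (N z)) < infdist z C + e" for z
    unfolding N_def using LeastI_ex[OF near] .
  ultimately show thesis
    using that by blast
qed

lemma coupling_graph:
  fixes \<mu> :: "'a::{metric_space,second_countable_topology} measure"
  assumes "borel_prob \<mu>" and [measurable]: "T \<in> borel_measurable borel"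
  shows "distr \<mu> borel (\<lambda>z. (z, T z)) \<in> couplings \<mu> (distr \<mu> borel T)"
proof -
  have [measurable_cong]: "sets \<mu> = sets borel" and "prob_space \<mu>"
    using assms(1) by (auto simp: borel_prob_def)
  show ?thesis
    using \<open>prob_space \<mu>\<close> unfolding couplings_def borel_prob_def
    by (simp add: prob_space.prob_space_distr distr_distr comp_def distr_id2
        \<open>sets \<mu> = sets borel\<close>)
qed

lemma W1_distr_le:
  fixes \<mu> :: "'a::{metric_space,second_countable_topology} measure"
  assumes "borel_prob \<mu>" and [measurable]: "T \<in> borel_measurable borel"
  shows "W1 \<mu> (distr \<mu> borel T) \<le> (\<integral>\<^sup>+ z. dist z (T z) \<partial>\<mu>)"
proof -
  have [measurable_cong]: "sets \<mu> = sets borel"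
    using assms(1) by (simp add: borel_prob_def)
  have "W1 \<mu> (distr \<mu> borel T)
      \<le> (\<integral>\<^sup>+ p. dist (fst p) (snd p) \<partial>distr \<mu> borel (\<lambda>z. (z, T z)))"
    unfolding W1_def using coupling_graph[OF assms] by (rule INF_lower)
  also have "\<dots> = (\<integral>\<^sup>+ z. dist z (T z) \<partial>\<mu>)"
    by (subst nn_integral_distr) measurable
  finally show ?thesis .
qed

lemma distr_in_P1:
  fixes \<mu> :: "'a::{metric_space,second_countable_topology} measure"
  assumes "\<mu> \<in> P1" and [measurable]: "T \<in> borel_measurable borel"
    and "(\<integral>\<^sup>+ z. dist z (T z) \<partial>\<mu>) < \<infinity>"
  shows "distr \<mu> borel T \<in> P1"
proof -
  have [measurable_cong]: "sets \<mu> = sets borel" and "prob_space \<mu>"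
    using assms(1) by (auto simp: P1_def borel_prob_def)
  obtain y0 where y0: "(\<integral>\<^sup>+ z. dist z y0 \<partial>\<mu>) < \<infinity>"
    using assms(1) by (auto simp: P1_def finite_first_moment_def)
  have "(\<integral>\<^sup>+ y. dist y y0 \<partial>distr \<mu> borel T) = (\<integral>\<^sup>+ z. dist (T z) y0 \<partial>\<mu>)"
    by (rule nn_integral_distr) measurable
  also have "\<dots> \<le> (\<integral>\<^sup>+ z. ennreal (dist z (T z)) + dist z y0 \<partial>\<mu>)"
    by (intro nn_integral_mono)
      (simp add: ennreal_plus[symmetric] dist_triangle3 del: ennreal_plus)
  also have "\<dots> = (\<integral>\<^sup>+ z. dist z (T z) \<partial>\<mu>) + (\<integral>\<^sup>+ z. dist z y0 \<partial>\<mu>)"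
    by (rule nn_integral_add) measurable
  also have "\<dots> < \<infinity>"
    using assms(3) y0 by simp
  finally show ?thesis
    using \<open>prob_space \<mu>\<close>
    by (auto simp: P1_def borel_prob_def finite_first_moment_def prob_space.prob_space_distr)
qed

lemma W1_set_PA_eq_nn_integral_infdist:
  fixes \<mu> :: "'a::{metric_space,second_countable_topology} measure"
  assumes "\<mu> \<in> P1" "closed C" "C \<noteq> {}"
  shows "W1_set \<mu> (PA C) = (\<integral>\<^sup>+ z. infdist z C \<partial>\<mu>)"
proof (rule antisym)
  have [measurable_cong]: "sets \<mu> = sets borel" and "prob_space \<mu>"
    using assms(1) by (auto simp: P1_def borel_prob_def)
  show "W1_set \<mu> (PA C) \<le> (\<integral>\<^sup>+ z. infdist z C \<partial>\<mu>)"
  proof (rule ennreal_le_epsilon)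
    fix e :: real assume finite: "(\<integral>\<^sup>+ z. infdist z C \<partial>\<mu>) < top" and "0 < e"
    obtain T where [measurable]: "T \<in> borel_measurable borel" and "\<And>z. T z \<in> C"
      and near: "\<And>z. dist z (T z) < infdist z C + e"
      using measurable_near_selection[OF \<open>C \<noteq> {}\<close> \<open>0 < e\<close>] by blast
    have "(\<integral>\<^sup>+ z. dist z (T z) \<partial>\<mu>) \<le> (\<integral>\<^sup>+ z. ennreal (infdist z C) + e \<partial>\<mu>)"
      using near \<open>0 < e\<close> by (intro nn_integral_mono)
        (simp add: ennreal_plus[symmetric] infdist_nonneg less_imp_le del: ennreal_plus)
    also have "\<dots> = (\<integral>\<^sup>+ z. infdist z C \<partial>\<mu>) + e"
      using \<open>prob_space \<mu>\<close> by (simp add: nn_integral_add prob_space.emeasure_space_1)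
    finally have transport: "(\<integral>\<^sup>+ z. dist z (T z) \<partial>\<mu>) \<le> (\<integral>\<^sup>+ z. infdist z C \<partial>\<mu>) + e" .
    have "T -` (- C) = {}"
      using \<open>\<And>z. T z \<in> C\<close> by auto
    then have "emeasure (distr \<mu> borel T) (- C) = 0"
      using \<open>closed C\<close> by (subst emeasure_distr) (auto simp: open_Compl)
    then have "distr \<mu> borel T \<in> PA C"
      using distr_in_P1[OF \<open>\<mu> \<in> P1\<close>] transport finite \<open>closed C\<close>
      by (auto simp: PA_def msupp_subset_closed order.strict_trans1 ennreal_add_less_top)
    then have "W1_set \<mu> (PA C) \<le> W1 \<mu> (distr \<mu> borel T)"
      unfolding W1_set_def by (rule INF_lower)
    also have "\<dots> \<le> (\<integral>\<^sup>+ z. dist z (T z) \<partial>\<mu>)"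
      using \<open>\<mu> \<in> P1\<close> by (intro W1_distr_le) (auto simp: P1_def)
    finally show "W1_set \<mu> (PA C) \<le> (\<integral>\<^sup>+ z. infdist z C \<partial>\<mu>) + e"
      using transport by simp
  qed
  show "(\<integral>\<^sup>+ z. infdist z C \<partial>\<mu>) \<le> W1_set \<mu> (PA C)"
    by (rule nn_integral_infdist_le_W1_set)
qed

lemma indicator_open_eq_SUP_infdist:
  fixes U :: "'a::metric_space set"
  assumes "open U" "U \<noteq> UNIV"
  shows "indicator U z = (SUP n. ennreal (min 1 (real n * infdist z (- U))))"
proof (cases "z \<in> U")
  case True
  with assms have "infdist z (- U) > 0"
    by (intro infdist_pos_not_in_closed) auto
  then obtain n :: nat where "1 \<le> real n * infdist z (- U)"
    by (metis ex_less_of_nat_mult less_le_not_le linorder_le_less_linear mult.commute)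
  then have "(SUP n. ennreal (min 1 (real n * infdist z (- U)))) = 1"
    by (intro antisym SUP_least SUP_upper2[of n]) auto
  with True show ?thesis
    by simp
qed simp

lemma emeasure_open_eq_SUP_integral:
  fixes M :: "'a::metric_space measure"
  assumes "sets M = sets borel" "prob_space M" "open U" "U \<noteq> UNIV"
  shows "emeasure M U = (SUP n. ennreal (\<integral>z. min 1 (real n * infdist z (- U)) \<partial>M))"
proof -
  interpret prob_space M by fact
  define f where "f n z = min 1 (real n * infdist z (- U))" for n :: nat and z
  have [measurable_cong]: "sets M = sets borel" and [measurable]: "f n \<in> borel_measurable borel" for n
    using assms(1) unfolding f_def by measurable
  have f_nonneg: "0 \<le> f n z" for n z
    unfolding f_def by (simp add: infdist_nonneg)
  have "incseq (\<lambda>n z. ennreal (f n z))"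
    unfolding incseq_def le_fun_def f_def
    by (auto intro!: ennreal_leI min.mono mult_right_mono infdist_nonneg)
  then have "(\<integral>\<^sup>+ z. indicator U z \<partial>M) = (SUP n. \<integral>\<^sup>+ z. f n z \<partial>M)"
    unfolding indicator_open_eq_SUP_infdist[OF assms(3,4)] f_def [symmetric]
    by (intro nn_integral_monotone_convergence_SUP) measurable
  moreover have "(\<integral>\<^sup>+ z. f n z \<partial>M) = ennreal (\<integral>z. f n z \<partial>M)" for n
    using f_nonneg
    by (intro nn_integral_eq_integral integrable_const_bound[where B=1]) (auto simp: f_def)
  ultimately show ?thesis
    using assms by (simp add: f_def)
qed

lemma feller_measurable_subprob_algebra:
  fixes Q :: "'y::topological_space \<Rightarrow> 'z::metric_space measure"
  assumes "markov_kernel Q" "feller Q"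
  shows "Q \<in> borel \<rightarrow>\<^sub>M subprob_algebra borel"
proof -
  have Q: "sets (Q a) = sets borel" "prob_space (Q a)" for a
    using assms(1) by (auto simp: markov_kernel_def borel_prob_def)
  have UNIV: "emeasure (Q a) UNIV = 1" for a
    using Q prob_space.emeasure_space_1 by (metis sets_eq_imp_space_eq space_borel)
  have "(\<lambda>a. emeasure (Q a) U) \<in> borel_measurable borel" if "open U" for U
  proof (cases "U = UNIV")
    case False
    have "continuous_on UNIV (\<lambda>z. min 1 (real n * infdist z (- U)))"
      and "bounded (range (\<lambda>z. min 1 (real n * infdist z (- U))))" for n
      by (auto intro!: continuous_intros exI[of _ 1] simp: bounded_iff infdist_nonneg)
    then have "continuous_on UNIV (\<lambda>a. \<integral>z. min 1 (real n * infdist z (- U)) \<partial>Q a)" for n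
      using assms(2) unfolding feller_def by blast
    then have [measurable]:
      "(\<lambda>a. \<integral>z. min 1 (real n * infdist z (- U)) \<partial>Q a) \<in> borel_measurable borel" for n
      by (rule borel_measurable_continuous_onI)
    show ?thesis
      using Q that False by (simp add: emeasure_open_eq_SUP_integral)
  qed (simp add: UNIV)
  then show ?thesis
    using Q UNIV
    by (intro measurable_subprob_algebra_generated[where \<Omega>=UNIV and G="{U. open U}"])
      (auto simp: sets_borel Int_stable_def prob_space_imp_subprob_space)
qed

lemma kcomp_eq_bind:
  assumes "Q \<in> borel \<rightarrow>\<^sub>M subprob_algebra borel" "sets (P x) = sets borel"
  shows "kcomp Q P x = P x \<bind> Q"
proof -
  have [measurable_cong]: "sets (P x) = sets borel" and space: "space (P x) = UNIV"
    using assms(2) sets_eq_imp_space_eq by fastforce+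
  have Q [measurable]: "Q \<in> P x \<rightarrow>\<^sub>M subprob_algebra borel"
    using assms(1) by measurable
  have "sets (P x \<bind> Q) = sets borel"
    using space by (simp add: sets_bind_measurable[OF Q])
  then have "P x \<bind> Q = measure_of UNIV (sets borel) (emeasure (P x \<bind> Q))"
    by (metis measure_of_of_measure sets_eq_imp_space_eq space_borel)
  also have "\<dots> = kcomp Q P x"
    unfolding kcomp_def using space
    by (intro measure_of_eq) (auto simp: emeasure_bind[OF _ Q] sets.sigma_sets_eq[of borel, simplified])
  finally show ?thesis ..
qed

lemma nn_integral_kernel_le_plus_lipschitz:
  fixes f :: "'z::{metric_space,second_countable_topology} \<Rightarrow> real"
  assumes "\<forall>y y'. W1 (Q y) (Q y') \<le> ennreal (L * dist y y')"
    and "\<And>a b. f a \<le> f b + dist a b" "\<And>a. f a \<ge> 0" "f \<in> borel_measurable borel"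
  shows "(\<integral>\<^sup>+ z. f z \<partial>Q y) \<le> (\<integral>\<^sup>+ z. f z \<partial>Q y') + ennreal (L * dist y y')"
proof -
  have "(\<integral>\<^sup>+ z. f z \<partial>Q y) \<le> (\<integral>\<^sup>+ z. f z \<partial>Q y') + W1 (Q y) (Q y')"
    using assms(2-4) by (rule nn_integral_le_plus_W1)
  also have "\<dots> \<le> (\<integral>\<^sup>+ z. f z \<partial>Q y') + ennreal (L * dist y y')"
    using assms(1) by (intro add_left_mono) auto
  finally show ?thesis .
qed

lemma bind_in_P1:
  fixes M :: "'y::{metric_space,second_countable_topology} measure"
    and Q :: "'y \<Rightarrow> 'z::{metric_space,second_countable_topology} measure"
  assumes "M \<in> P1" "markov_kernel Q" "Q \<in> borel \<rightarrow>\<^sub>M subprob_algebra borel" "\<forall>y. Q y \<in> P1"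
    and "L \<ge> 0" "\<forall>y y'. W1 (Q y) (Q y') \<le> ennreal (L * dist y y')"
  shows "M \<bind> Q \<in> P1"
proof -
  have [measurable_cong]: "sets M = sets borel" and "prob_space M"
    using assms(1) by (auto simp: P1_def borel_prob_def)
  then have space: "space M = UNIV"
    by (metis sets_eq_imp_space_eq space_borel)
  have Q [measurable]: "Q \<in> M \<rightarrow>\<^sub>M subprob_algebra borel"
    using assms(3) by measurable
  have "prob_space (M \<bind> Q)"
    using assms(2) by (intro prob_space.prob_space_bind[OF \<open>prob_space M\<close> _ Q])
      (auto simp: markov_kernel_def borel_prob_def)
  moreover have "sets (M \<bind> Q) = sets borel"
    using space by (simp add: sets_bind_measurable[OF Q])
  ultimately have "borel_prob (M \<bind> Q)"
    by (simp add: borel_prob_def)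
  obtain y0 where y0: "(\<integral>\<^sup>+ y. dist y y0 \<partial>M) < \<infinity>"
    using assms(1) by (auto simp: P1_def finite_first_moment_def)
  obtain z0 where z0: "(\<integral>\<^sup>+ z. dist z z0 \<partial>Q y0) < \<infinity>"
    using assms(4) by (auto simp: P1_def finite_first_moment_def)
  have "(\<integral>\<^sup>+ z. dist z z0 \<partial>(M \<bind> Q)) = (\<integral>\<^sup>+ y. (\<integral>\<^sup>+ z. dist z z0 \<partial>Q y) \<partial>M)"
    by (rule nn_integral_bind[OF _ Q]) measurable
  also have "\<dots> \<le> (\<integral>\<^sup>+ y. (\<integral>\<^sup>+ z. dist z z0 \<partial>Q y0) + ennreal L * dist y y0 \<partial>M)"
  proof (rule nn_integral_mono)
    fix y
    have "(\<integral>\<^sup>+ z. dist z z0 \<partial>Q y) \<le> (\<integral>\<^sup>+ z. dist z z0 \<partial>Q y0) + ennreal (L * dist y y0)"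
      using assms(6) by (rule nn_integral_kernel_le_plus_lipschitz)
        (auto simp: add.commute dist_triangle)
    then show "(\<integral>\<^sup>+ z. dist z z0 \<partial>Q y) \<le> (\<integral>\<^sup>+ z. dist z z0 \<partial>Q y0) + ennreal L * dist y y0"
      using assms(5) by (simp add: ennreal_mult)
  qed
  also have "\<dots> = (\<integral>\<^sup>+ z. dist z z0 \<partial>Q y0) + ennreal L * (\<integral>\<^sup>+ y. dist y y0 \<partial>M)"
    using \<open>prob_space M\<close>
    by (simp add: nn_integral_add nn_integral_cmult prob_space.emeasure_space_1)
  also have "\<dots> < \<infinity>"
    using y0 z0 by (simp add: ennreal_mult_less_top)
  finally show ?thesis
    using \<open>borel_prob (M \<bind> Q)\<close> by (auto simp: P1_def finite_first_moment_def)
qed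

lemma lipschitz_le_plus_infdist:
  fixes g :: "'a::metric_space \<Rightarrow> ennreal"
  assumes lip: "\<And>y y'. g y \<le> g y' + ennreal (L * dist y y')" and "L \<ge> 0"
    and "A \<noteq> {}" and bound: "\<And>y. y \<in> A \<Longrightarrow> g y \<le> c"
  shows "g y \<le> c + ennreal (L * infdist y A)"
proof (rule ennreal_le_epsilon)
  fix e :: real assume "0 < e"
  then obtain a where "a \<in> A" and a: "dist y a < infdist y A + e / (L + 1)"
    using infdist_approx[OF \<open>A \<noteq> {}\<close>, of "e / (L + 1)"] \<open>L \<ge> 0\<close> by auto
  have "L * (e / (L + 1)) \<le> e"
    using \<open>L \<ge> 0\<close> \<open>0 < e\<close> by (simp add: field_simps)
  moreover have "L * dist y a \<le> L * (infdist y A + e / (L + 1))"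
    using a \<open>L \<ge> 0\<close> by (intro mult_left_mono) auto
  ultimately have "L * dist y a \<le> L * infdist y A + e"
    by (simp add: distrib_left)
  then have "ennreal (L * dist y a) \<le> ennreal (L * infdist y A) + e"
    using \<open>L \<ge> 0\<close> \<open>0 < e\<close> by (simp add: ennreal_plus[symmetric] infdist_nonneg del: ennreal_plus)
  then show "g y \<le> c + ennreal (L * infdist y A) + e"
    using lip[of y a] bound[OF \<open>a \<in> A\<close>]
    by (metis (no_types, lifting) add.assoc add_mono order_trans)
qed

lemma W1_set_bind_PA_le:
  fixes M :: "'y::{metric_space,second_countable_topology} measure"
    and Q :: "'y \<Rightarrow> 'z::{metric_space,second_countable_topology} measure"
  assumes "M \<in> P1" "markov_kernel Q" "Q \<in> borel \<rightarrow>\<^sub>M subprob_algebra borel" "\<forall>y. Q y \<in> P1"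
    and "L \<ge> 0" "\<forall>y y'. W1 (Q y) (Q y') \<le> ennreal (L * dist y y')"
    and "\<delta> \<ge> 0" "\<epsilon> \<ge> 0" "closed C"
    and M_close: "W1_set M (PA {y. W1_set (Q y) (PA C) \<le> ennreal \<epsilon>}) \<le> ennreal \<delta>"
  shows "W1_set (M \<bind> Q) (PA C) \<le> ennreal (L * \<delta> + \<epsilon>)"
proof -
  have [measurable_cong]: "sets M = sets borel" and "prob_space M"
    using assms(1) by (auto simp: P1_def borel_prob_def)
  have Q [measurable]: "Q \<in> M \<rightarrow>\<^sub>M subprob_algebra borel"
    using assms(3) by measurable
  define A where "A = {y. W1_set (Q y) (PA C) \<le> ennreal \<epsilon>}"
  obtain y1 where "y1 \<in> A"
    using W1_set_PA_le_imp_nonempty[OF M_close] unfolding A_def by blast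
  then have "C \<noteq> {}"
    unfolding A_def by (simp add: W1_set_PA_le_imp_nonempty)
  define g where "g y = (\<integral>\<^sup>+ z. infdist z C \<partial>Q y)" for y
  have "g y \<le> ennreal \<epsilon> + ennreal (L * infdist y A)" for y
  proof (rule lipschitz_le_plus_infdist[OF _ \<open>L \<ge> 0\<close>])
    show "g y \<le> g y' + ennreal (L * dist y y')" for y y'
      unfolding g_def using assms(6) by (rule nn_integral_kernel_le_plus_lipschitz)
        (auto simp: infdist_triangle infdist_nonneg)
    show "g y \<le> ennreal \<epsilon>" if "y \<in> A" for y
      using that nn_integral_infdist_le_W1_set[of "Q y" C] by (simp add: A_def g_def)
  qed (use \<open>y1 \<in> A\<close> in blast)
  then have "(\<integral>\<^sup>+ y. g y \<partial>M) \<le> (\<integral>\<^sup>+ y. ennreal \<epsilon> + ennreal L * infdist y A \<partial>M)"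
    using \<open>L \<ge> 0\<close> by (intro nn_integral_mono) (simp add: ennreal_mult' infdist_nonneg)
  also have "\<dots> = ennreal \<epsilon> + ennreal L * (\<integral>\<^sup>+ y. infdist y A \<partial>M)"
    using \<open>prob_space M\<close> by (simp add: nn_integral_add nn_integral_cmult prob_space.emeasure_space_1)
  also have "\<dots> \<le> ennreal \<epsilon> + ennreal L * ennreal \<delta>"
    using order_trans[OF nn_integral_infdist_le_W1_set M_close[folded A_def]]
    by (intro add_left_mono mult_left_mono) simp_all
  also have "\<dots> = ennreal (L * \<delta> + \<epsilon>)"
    using assms(5,7,8) by (simp add: ennreal_plus ennreal_mult add.commute)
  finally have "(\<integral>\<^sup>+ y. g y \<partial>M) \<le> ennreal (L * \<delta> + \<epsilon>)" .
  moreover have "W1_set (M \<bind> Q) (PA C) = (\<integral>\<^sup>+ z. infdist z C \<partial>(M \<bind> Q))"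
    using bind_in_P1[OF assms(1-6)] \<open>closed C\<close> \<open>C \<noteq> {}\<close>
    by (rule W1_set_PA_eq_nn_integral_infdist)
  moreover have "\<dots> = (\<integral>\<^sup>+ y. g y \<partial>M)"
    unfolding g_def by (rule nn_integral_bind[OF _ Q]) measurable
  ultimately show ?thesis
    by simp
qed

theorem mainTheorem18:
  fixes P :: "'x::polish_space \<Rightarrow> 'y::polish_space measure"
    and Q :: "'y \<Rightarrow> 'z::polish_space measure"
    and S :: "('z \<times> 'm::t2_space) set"
    and L \<delta> \<epsilon> :: real
  assumes "compact (UNIV :: 'm set)"
    and "markov_kernel P" "feller P" "tight_kernel P" "\<forall>x. P x \<in> P1"
    and "markov_kernel Q" "feller Q" "tight_kernel Q" "\<forall>y. Q y \<in> P1"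
    and "L \<ge> 0"
    and "\<forall>y y'. W1 (Q y) (Q y') \<le> ennreal (L * dist y y')"
    and "\<delta> \<ge> 0" "\<epsilon> \<ge> 0"
    and "closed S"
  shows "wpullback P \<delta> (wpullback Q \<epsilon> S) \<subseteq> wpullback (kcomp Q P) (L * \<delta> + \<epsilon>) S"
proof
  fix p assume "p \<in> wpullback P \<delta> (wpullback Q \<epsilon> S)"
  then obtain x m where p: "p = (x, m)"
    and close: "W1_set (P x) (PA {y. W1_set (Q y) (PA (rel_section S m)) \<le> ennreal \<epsilon>}) \<le> ennreal \<delta>"
    by (auto simp: wpullback_def rel_section_def)
  have "closed (rel_section S m)"
    using continuous_closed_vimage[OF \<open>closed S\<close>, of "\<lambda>z. (z, m)"]
    by (simp add: rel_section_def vimage_def continuous_intros)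
  moreover have Q: "Q \<in> borel \<rightarrow>\<^sub>M subprob_algebra borel"
    using assms(6,7) by (rule feller_measurable_subprob_algebra)
  ultimately have "W1_set (P x \<bind> Q) (PA (rel_section S m)) \<le> ennreal (L * \<delta> + \<epsilon>)"
    using assms(5,6,9-13) close by (intro W1_set_bind_PA_le) auto
  moreover have "kcomp Q P x = P x \<bind> Q"
    using Q assms(2) by (intro kcomp_eq_bind) (auto simp: markov_kernel_def borel_prob_def)
  ultimately show "p \<in> wpullback (kcomp Q P) (L * \<delta> + \<epsilon>) S"
    by (simp add: p wpullback_def)
qed

end
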